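(* Let $\mathsf{RCA}_0+B\Sigma^0_2$ be the base theory. Then $B\Sigma^0_3$ is equivalent to the following statement: for every $u\in\mathbb{N}$ and every function $h:u\times\mathbb{N}\to\mathbb{N}$ such that for every $x<u$ there is $m$ with $h(x,z)<m$ for infinitely many $z$, there is $M\in\mathbb{N}$ such that for every $x<u$, $h(x,z)<M$ for infinitely many $z$.
   Context: $\mathbb{N}$ denotes the first-order universe of a model of second-order arithmetic; $h$ ranges over functions (sets) of the model. $B\Sigma^0_n$ is the $\Sigma^0_n$ bounding (collection) scheme. *)

theory Defs
  imports Main
begin

text \<open>Model-theoretic setting: L2-structures (Henkin models of second-order
arithmetic) whose first-order universe is the whole type 'a, together with the
collection of sets of the model. Arithmetical formulas are deeply embedded
(de Bruijn indices for number variables, set variables indexed by nat).\<close>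

record 'a l2model =
  zer :: 'a
  one :: 'a
  add :: "'a \<Rightarrow> 'a \<Rightarrow> 'a"
  mul :: "'a \<Rightarrow> 'a \<Rightarrow> 'a"
  lt  :: "'a \<Rightarrow> 'a \<Rightarrow> bool"
  sets :: "'a set set"

datatype tm = Var nat | Zero | One | Plus tm tm | Times tm tm

datatype fm =
    Eq tm tm | Less tm tm | Mem tm nat
  | Neg fm | Conj fm fm | Disj fm fm
  | Ex fm | All fm
  | BEx tm fm   \<comment> \<open>exists x < t (t evaluated outside the binder)\<close>
  | BAll tm fm

primrec evt :: "'a l2model \<Rightarrow> (nat \<Rightarrow> 'a) \<Rightarrow> tm \<Rightarrow> 'a" where
  "evt M e (Var k) = e k"
| "evt M e Zero = zer M"
| "evt M e One = one M"
| "evt M e (Plus s t) = add M (evt M e s) (evt M e t)"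
| "evt M e (Times s t) = mul M (evt M e s) (evt M e t)"

primrec sat :: "'a l2model \<Rightarrow> (nat \<Rightarrow> 'a) \<Rightarrow> (nat \<Rightarrow> 'a set) \<Rightarrow> fm \<Rightarrow> bool" where
  "sat M e E (Eq s t) = (evt M e s = evt M e t)"
| "sat M e E (Less s t) = lt M (evt M e s) (evt M e t)"
| "sat M e E (Mem t k) = (evt M e t \<in> E k)"
| "sat M e E (Neg p) = (\<not> sat M e E p)"
| "sat M e E (Conj p q) = (sat M e E p \<and> sat M e E q)"
| "sat M e E (Disj p q) = (sat M e E p \<or> sat M e E q)"
| "sat M e E (Ex p) = (\<exists>a. sat M (case_nat a e) E p)"
| "sat M e E (All p) = (\<forall>a. sat M (case_nat a e) E p)"
| "sat M e E (BEx t p) = (\<exists>a. lt M a (evt M e t) \<and> sat M (case_nat a e) E p)"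
| "sat M e E (BAll t p) = (\<forall>a. lt M a (evt M e t) \<longrightarrow> sat M (case_nat a e) E p)"

inductive delta0 :: "fm \<Rightarrow> bool" where
  "delta0 (Eq s t)" | "delta0 (Less s t)" | "delta0 (Mem t k)"
| "delta0 p \<Longrightarrow> delta0 (Neg p)"
| "delta0 p \<Longrightarrow> delta0 q \<Longrightarrow> delta0 (Conj p q)"
| "delta0 p \<Longrightarrow> delta0 q \<Longrightarrow> delta0 (Disj p q)"
| "delta0 p \<Longrightarrow> delta0 (BEx t p)"
| "delta0 p \<Longrightarrow> delta0 (BAll t p)"

inductive sigma_fm :: "nat \<Rightarrow> fm \<Rightarrow> bool" and pi_fm :: "nat \<Rightarrow> fm \<Rightarrow> bool" where
  "delta0 p \<Longrightarrow> sigma_fm 0 p"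
| "delta0 p \<Longrightarrow> pi_fm 0 p"
| "pi_fm n p \<Longrightarrow> sigma_fm (Suc n) p"
| "sigma_fm (Suc n) p \<Longrightarrow> sigma_fm (Suc n) (Ex p)"
| "sigma_fm n p \<Longrightarrow> pi_fm (Suc n) p"
| "pi_fm (Suc n) p \<Longrightarrow> pi_fm (Suc n) (All p)"

definition set_env :: "'a l2model \<Rightarrow> (nat \<Rightarrow> 'a set) \<Rightarrow> bool" where
  "set_env M E \<longleftrightarrow> (\<forall>k. E k \<in> sets M)"

definition basic_axioms :: "'a l2model \<Rightarrow> bool" where
  "basic_axioms M \<longleftrightarrow>
     (\<forall>n. add M n (one M) \<noteq> zer M) \<and>
     (\<forall>m n. add M m (one M) = add M n (one M) \<longrightarrow> m = n) \<and>
     (\<forall>m. \<not> lt M m (zer M)) \<and>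
     (\<forall>m n. lt M m (add M n (one M)) \<longleftrightarrow> (lt M m n \<or> m = n)) \<and>
     (\<forall>m. add M m (zer M) = m) \<and>
     (\<forall>m n. add M m (add M n (one M)) = add M (add M m n) (one M)) \<and>
     (\<forall>m. mul M m (zer M) = zer M) \<and>
     (\<forall>m n. mul M m (add M n (one M)) = add M (mul M m n) m)"

text \<open>Sigma^0_1 induction (with number and set parameters); variable 0 is the induction variable.\<close>
definition sigma1_induction :: "'a l2model \<Rightarrow> bool" where
  "sigma1_induction M \<longleftrightarrow>
     (\<forall>p e E. sigma_fm 1 p \<and> set_env M E \<longrightarrow>
        sat M (case_nat (zer M) e) E p \<and>
        (\<forall>n. sat M (case_nat n e) E p \<longrightarrow> sat M (case_nat (add M n (one M)) e) E p)
        \<longrightarrow> (\<forall>n. sat M (case_nat n e) E p))"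

definition delta1_comprehension :: "'a l2model \<Rightarrow> bool" where
  "delta1_comprehension M \<longleftrightarrow>
     (\<forall>p q e E. sigma_fm 1 p \<and> pi_fm 1 q \<and> set_env M E \<and>
        (\<forall>n. sat M (case_nat n e) E p \<longleftrightarrow> sat M (case_nat n e) E q)
        \<longrightarrow> (\<exists>X\<in>sets M. \<forall>n. n \<in> X \<longleftrightarrow> sat M (case_nat n e) E p))"

definition RCA0 :: "'a l2model \<Rightarrow> bool" where
  "RCA0 M \<longleftrightarrow> basic_axioms M \<and> sigma1_induction M \<and> delta1_comprehension M"

text \<open>Sigma^0_n bounding: for Sigma^0_n p(i,j) (j = var 0, i = var 1, rest parameters),
  forall u. (forall i<u. exists j. p) --> exists v. forall i<u. exists j<v. p.\<close>
definition BSigma :: "nat \<Rightarrow> 'a l2model \<Rightarrow> bool" where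
  "BSigma n M \<longleftrightarrow>
     (\<forall>p e E u. sigma_fm n p \<and> set_env M E \<longrightarrow>
        (\<forall>i. lt M i u \<longrightarrow> (\<exists>j. sat M (case_nat j (case_nat i e)) E p))
        \<longrightarrow> (\<exists>v. \<forall>i. lt M i u \<longrightarrow> (\<exists>j. lt M j v \<and> sat M (case_nat j (case_nat i e)) E p)))"

definition mpair :: "'a l2model \<Rightarrow> 'a \<Rightarrow> 'a \<Rightarrow> 'a" where
  "mpair M a b = add M (mul M (add M a b) (add M a b)) a"

text \<open>H is (the code of) a function h : u \<times> N \<rightarrow> N: a set of pairs ((x,z),y) with x<u,
  total and single-valued on u \<times> N.\<close>
definition is_fun2 :: "'a l2model \<Rightarrow> 'a set \<Rightarrow> 'a \<Rightarrow> bool" where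
  "is_fun2 M H u \<longleftrightarrow>
     (\<forall>w\<in>H. \<exists>x z y. lt M x u \<and> w = mpair M (mpair M x z) y) \<and>
     (\<forall>x z. lt M x u \<longrightarrow> (\<exists>!y. mpair M (mpair M x z) y \<in> H))"

definition val_lt :: "'a l2model \<Rightarrow> 'a set \<Rightarrow> 'a \<Rightarrow> 'a \<Rightarrow> 'a \<Rightarrow> bool" where
  "val_lt M H x z m \<longleftrightarrow> (\<exists>y. mpair M (mpair M x z) y \<in> H \<and> lt M y m)"

text \<open>"for infinitely many z" = unboundedly many z.\<close>
definition inf_many :: "'a l2model \<Rightarrow> ('a \<Rightarrow> bool) \<Rightarrow> bool" where
  "inf_many M P \<longleftrightarrow> (\<forall>k. \<exists>z. lt M k z \<and> P z)"

definition bounded_inf_principle :: "'a l2model \<Rightarrow> bool" where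
  "bounded_inf_principle M \<longleftrightarrow>
     (\<forall>u. \<forall>H\<in>sets M. is_fun2 M H u \<and>
        (\<forall>x. lt M x u \<longrightarrow> (\<exists>m. inf_many M (\<lambda>z. val_lt M H x z m)))
        \<longrightarrow> (\<exists>Mb. \<forall>x. lt M x u \<longrightarrow> inf_many M (\<lambda>z. val_lt M H x z Mb)))"

end

(*
  BSigma3 gives the principle directly: "h(x, z) < m for infinitely many z" is a Pi2 property of
  x and m, so BSigma3 provides a v such that every x < u has a suitable m below v, and then v
  itself is suitable.

  For the converse, write a Sigma3 formula as "exists t. forall ys. exists zs. delta", where the
  outer block t also carries the value j to be bounded. Fix i and a bound J. Call level l
  witnessed with search bound s if some t below J answers every ys below l by some zs below s,
  and call s a J-jump if it is the least search bound of some level l < s. By BSigma2 for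
  tuples, a witness t below J exists iff every level is witnessed, and by Sigma1 induction this
  happens iff there are unboundedly many J-jumps. Let h(i, s) be the least J for which s is a
  J-jump (and s if there is none). If i has a witness below J, then h(i, s) <= J at the
  infinitely many J-jumps s. Conversely, if h(i, s) < M for infinitely many s, then pigeonhole
  (BSigma2 over J < M) yields a J < M with unboundedly many jumps, i.e. a witness for i below M.
  The principle applied to h therefore bounds the witnesses j uniformly for i < u.
*)

theory Submission
  imports Defs
begin

section \<open>Renaming, list environments and prenex blocks\<close>

primrec rename_tm :: "(nat \<Rightarrow> nat) \<Rightarrow> tm \<Rightarrow> tm" where
  "rename_tm f (Var k) = Var (f k)"
| "rename_tm f Zero = Zero"
| "rename_tm f One = One"
| "rename_tm f (Plus s t) = Plus (rename_tm f s) (rename_tm f t)"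
| "rename_tm f (Times s t) = Times (rename_tm f s) (rename_tm f t)"

definition lift_renaming :: "(nat \<Rightarrow> nat) \<Rightarrow> nat \<Rightarrow> nat" where
  "lift_renaming f = case_nat 0 (\<lambda>k. Suc (f k))"

primrec rename_fm :: "(nat \<Rightarrow> nat) \<Rightarrow> fm \<Rightarrow> fm" where
  "rename_fm f (Eq s t) = Eq (rename_tm f s) (rename_tm f t)"
| "rename_fm f (Less s t) = Less (rename_tm f s) (rename_tm f t)"
| "rename_fm f (Mem t k) = Mem (rename_tm f t) k"
| "rename_fm f (Neg p) = Neg (rename_fm f p)"
| "rename_fm f (Conj p q) = Conj (rename_fm f p) (rename_fm f q)"
| "rename_fm f (Disj p q) = Disj (rename_fm f p) (rename_fm f q)"
| "rename_fm f (Ex p) = Ex (rename_fm (lift_renaming f) p)"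
| "rename_fm f (All p) = All (rename_fm (lift_renaming f) p)"
| "rename_fm f (BEx t p) = BEx (rename_tm f t) (rename_fm (lift_renaming f) p)"
| "rename_fm f (BAll t p) = BAll (rename_tm f t) (rename_fm (lift_renaming f) p)"

lemma evt_rename_tm: "evt M e (rename_tm f t) = evt M (e \<circ> f) t"
  by (induction t) auto

lemma case_nat_comp_lift_renaming: "case_nat a e \<circ> lift_renaming f = case_nat a (e \<circ> f)"
  by (rule ext) (simp add: lift_renaming_def split: nat.split)

lemma sat_rename_fm: "sat M e E (rename_fm f p) = sat M (e \<circ> f) E p"
  by (induction p arbitrary: f e) (simp_all add: evt_rename_tm case_nat_comp_lift_renaming)

lemma delta0_rename_fm: "delta0 p \<Longrightarrow> delta0 (rename_fm f p)"
  by (induction p arbitrary: f rule: delta0.induct) (auto intro: delta0.intros)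

definition prepend_env :: "'a list \<Rightarrow> (nat \<Rightarrow> 'a) \<Rightarrow> nat \<Rightarrow> 'a" where
  "prepend_env xs e k = (if k < length xs then xs ! k else e (k - length xs))"

lemma prepend_env_Nil [simp]: "prepend_env [] e = e"
  by (rule ext) (simp add: prepend_env_def)

lemma prepend_env_Cons: "prepend_env (x # xs) e = case_nat x (prepend_env xs e)"
  by (rule ext) (simp add: prepend_env_def split: nat.split)

lemma prepend_env_append: "prepend_env (xs @ ys) e = prepend_env xs (prepend_env ys e)"
  by (rule ext) (auto simp add: prepend_env_def nth_append)

lemma prepend_env_nth [simp]: "k < length xs \<Longrightarrow> prepend_env xs e k = xs ! k"
  by (simp add: prepend_env_def)

primrec vars_below :: "nat \<Rightarrow> tm \<Rightarrow> bool" where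
  "vars_below n (Var k) = (k < n)"
| "vars_below n Zero = True"
| "vars_below n One = True"
| "vars_below n (Plus s t) = (vars_below n s \<and> vars_below n t)"
| "vars_below n (Times s t) = (vars_below n s \<and> vars_below n t)"

definition evt_list :: "'a l2model \<Rightarrow> 'a list \<Rightarrow> tm \<Rightarrow> 'a" where
  "evt_list M xs t = evt M (prepend_env xs (\<lambda>_. zer M)) t"

lemma evt_list_simps [simp]:
  "k < length xs \<Longrightarrow> evt_list M xs (Var k) = xs ! k"
  "evt_list M xs Zero = zer M"
  "evt_list M xs One = one M"
  "evt_list M xs (Plus s t) = add M (evt_list M xs s) (evt_list M xs t)"
  "evt_list M xs (Times s t) = mul M (evt_list M xs s) (evt_list M xs t)"
  by (simp_all add: evt_list_def)

lemma evt_prepend_env: "vars_below (length xs) t \<Longrightarrow> evt M (prepend_env xs e) t = evt_list M xs t"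
  unfolding evt_list_def by (induction t) auto

definition mpair_tm :: "tm \<Rightarrow> tm \<Rightarrow> tm" where
  "mpair_tm s t = Plus (Times (Plus s t) (Plus s t)) s"

lemma vars_below_mpair_tm [simp]: "vars_below n (mpair_tm s t) \<longleftrightarrow> vars_below n s \<and> vars_below n t"
  by (auto simp: mpair_tm_def)

lemma evt_list_mpair_tm [simp]: "evt_list M xs (mpair_tm s t) = mpair M (evt_list M xs s) (evt_list M xs t)"
  by (simp add: mpair_tm_def mpair_def)

primrec Exs :: "nat \<Rightarrow> fm \<Rightarrow> fm" where
  "Exs 0 p = p"
| "Exs (Suc n) p = Ex (Exs n p)"

primrec Alls :: "nat \<Rightarrow> fm \<Rightarrow> fm" where
  "Alls 0 p = p"
| "Alls (Suc n) p = All (Alls n p)"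

lemma Exs_Suc_inner: "Exs (Suc n) p = Exs n (Ex p)"
  by (induction n) simp_all

lemma Alls_Suc_inner: "Alls (Suc n) p = Alls n (All p)"
  by (induction n) simp_all

lemma ex_length_Suc: "(\<exists>as. length as = Suc n \<and> P as) \<longleftrightarrow> (\<exists>as a. length as = n \<and> P (a # as))"
  by (metis length_Cons length_Suc_conv)

lemma all_length_Suc: "(\<forall>as. length as = Suc n \<longrightarrow> P as) \<longleftrightarrow> (\<forall>as a. length as = n \<longrightarrow> P (a # as))"
  by (metis length_Cons length_Suc_conv)

lemma ex_length_Suc_snoc:
  "(\<exists>as. length as = Suc n \<and> P as) \<longleftrightarrow> (\<exists>as a. length as = n \<and> P (as @ [a]))"
  by (metis length_append_singleton length_Suc_conv_rev)

lemma sat_Exs: "sat M e E (Exs n p) \<longleftrightarrow> (\<exists>as. length as = n \<and> sat M (prepend_env as e) E p)"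
proof (induction n arbitrary: p)
  case (Suc n)
  then show ?case
    by (simp only: Exs_Suc_inner ex_length_Suc) (simp add: prepend_env_Cons)
qed simp

lemma sat_Alls: "sat M e E (Alls n p) \<longleftrightarrow> (\<forall>as. length as = n \<longrightarrow> sat M (prepend_env as e) E p)"
proof (induction n arbitrary: p)
  case (Suc n)
  then show ?case
    by (simp only: Alls_Suc_inner all_length_Suc) (simp add: prepend_env_Cons)
qed simp

lemma sigma_Suc_cases: "sigma_fm (Suc n) p \<Longrightarrow> pi_fm n p \<or> (\<exists>q. p = Ex q \<and> sigma_fm (Suc n) q)"
  by (erule sigma_fm.cases) auto

lemma pi_Suc_cases: "pi_fm (Suc n) p \<Longrightarrow> sigma_fm n p \<or> (\<exists>q. p = All q \<and> pi_fm (Suc n) q)"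
  by (erule pi_fm.cases) auto

lemma sigma_Suc_Exs: "sigma_fm (Suc n) p \<Longrightarrow> \<exists>k q. pi_fm n q \<and> p = Exs k q"
proof (induction p)
  case (Ex p)
  from sigma_Suc_cases[OF Ex.prems] show ?case
  proof
    assume "pi_fm n (Ex p)"
    then show ?thesis by (metis Exs.simps(1))
  next
    assume "\<exists>q. Ex p = Ex q \<and> sigma_fm (Suc n) q"
    then obtain k q where "pi_fm n q" "p = Exs k q" using Ex.IH by auto
    then show ?thesis by (metis Exs.simps(2))
  qed
qed (auto dest!: sigma_Suc_cases intro!: exI[of _ 0])

lemma pi_Suc_Alls: "pi_fm (Suc n) p \<Longrightarrow> \<exists>k q. sigma_fm n q \<and> p = Alls k q"
proof (induction p)
  case (All p)
  from pi_Suc_cases[OF All.prems] show ?case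
  proof
    assume "sigma_fm n (All p)"
    then show ?thesis by (metis Alls.simps(1))
  next
    assume "\<exists>q. All p = All q \<and> pi_fm (Suc n) q"
    then obtain k q where "sigma_fm n q" "p = Alls k q" using All.IH by auto
    then show ?thesis by (metis Alls.simps(2))
  qed
qed (auto dest!: pi_Suc_cases intro!: exI[of _ 0])

lemma pi_0_delta0: "pi_fm 0 p \<Longrightarrow> delta0 p"
  by (erule pi_fm.cases) auto

lemma sigma3_normal_form: "sigma_fm 3 p \<Longrightarrow> \<exists>k b c d. delta0 d \<and> p = Exs k (Alls b (Exs c d))"
  by (metis numeral_3_eq_3 sigma_Suc_Exs pi_Suc_Alls pi_0_delta0)

section \<open>Delta0-definable predicates of tuples\<close>

text \<open>The tuple \<open>xs\<close> occupies the variables \<open>0, ..., n - 1\<close>; \<open>e\<close> supplies the number parameters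
  beyond them.\<close>

definition delta0_definable :: "'a l2model \<Rightarrow> (nat \<Rightarrow> 'a set) \<Rightarrow> nat \<Rightarrow> ('a list \<Rightarrow> bool) \<Rightarrow> bool" where
  "delta0_definable M E n P \<longleftrightarrow>
     (\<exists>\<phi> e. delta0 \<phi> \<and> (\<forall>xs. length xs = n \<longrightarrow> P xs = sat M (prepend_env xs e) E \<phi>))"

lemma delta0_definable_sat: "delta0 \<phi> \<Longrightarrow> delta0_definable M E n (\<lambda>xs. sat M (prepend_env xs e) E \<phi>)"
  unfolding delta0_definable_def by blast

lemma delta0_definable_cong:
  "delta0_definable M E n P \<Longrightarrow> (\<And>xs. length xs = n \<Longrightarrow> P xs = Q xs) \<Longrightarrow> delta0_definable M E n Q"
  unfolding delta0_definable_def by metis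

lemma delta0_definable_not: "delta0_definable M E n P \<Longrightarrow> delta0_definable M E n (\<lambda>xs. \<not> P xs)"
  unfolding delta0_definable_def by (metis delta0.intros(4) sat.simps(4))

lemma delta0_definable_conj:
  assumes "delta0_definable M E n P" "delta0_definable M E n Q"
  shows "delta0_definable M E n (\<lambda>xs. P xs \<and> Q xs)"
proof -
  obtain \<phi>1 e1 where 1: "delta0 \<phi>1" "\<forall>xs. length xs = n \<longrightarrow> P xs = sat M (prepend_env xs e1) E \<phi>1"
    using assms(1) unfolding delta0_definable_def by blast
  obtain \<phi>2 e2 where 2: "delta0 \<phi>2" "\<forall>xs. length xs = n \<longrightarrow> Q xs = sat M (prepend_env xs e2) E \<phi>2"
    using assms(2) unfolding delta0_definable_def by blast
  \<comment> \<open>interleave the two parameter lists\<close>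
  define f1 where "f1 k = (if k < n then k else n + 2 * (k - n))" for k
  define f2 where "f2 k = (if k < n then k else n + 2 * (k - n) + 1)" for k
  define e where "e k = (if even k then e1 (k div 2) else e2 (k div 2))" for k
  have "prepend_env xs e \<circ> f1 = prepend_env xs e1" "prepend_env xs e \<circ> f2 = prepend_env xs e2"
    if "length xs = n" for xs
    by (rule ext; simp add: f1_def f2_def e_def prepend_env_def that)+
  then show ?thesis
    unfolding delta0_definable_def using 1 2
    by (intro exI[of _ "Conj (rename_fm f1 \<phi>1) (rename_fm f2 \<phi>2)"] exI[of _ e])
      (auto simp: sat_rename_fm intro: delta0.intros delta0_rename_fm)
qed

lemma delta0_definable_disj:
  assumes "delta0_definable M E n P" "delta0_definable M E n Q"
  shows "delta0_definable M E n (\<lambda>xs. P xs \<or> Q xs)"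
  using delta0_definable_not[OF delta0_definable_conj[OF assms[THEN delta0_definable_not]]]
  by (rule delta0_definable_cong) simp

lemma delta0_definable_imp:
  assumes "delta0_definable M E n P" "delta0_definable M E n Q"
  shows "delta0_definable M E n (\<lambda>xs. P xs \<longrightarrow> Q xs)"
  using delta0_definable_disj[OF delta0_definable_not[OF assms(1)] assms(2)]
  by (rule delta0_definable_cong) simp

lemma delta0_definable_less:
  "vars_below n s \<Longrightarrow> vars_below n t \<Longrightarrow> delta0_definable M E n (\<lambda>xs. lt M (evt_list M xs s) (evt_list M xs t))"
  by (rule delta0_definable_cong[OF delta0_definable_sat[of "Less s t" _ _ _ "\<lambda>_. zer M"]])
    (auto intro: delta0.intros simp: evt_list_def)

lemma delta0_definable_eq:
  "vars_below n s \<Longrightarrow> vars_below n t \<Longrightarrow> delta0_definable M E n (\<lambda>xs. evt_list M xs s = evt_list M xs t)"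
  by (rule delta0_definable_cong[OF delta0_definable_sat[of "Eq s t" _ _ _ "\<lambda>_. zer M"]])
    (auto intro: delta0.intros simp: evt_list_def)

lemma delta0_definable_less_nth:
  "i < n \<Longrightarrow> j < n \<Longrightarrow> delta0_definable M E n (\<lambda>xs. lt M (xs ! i) (xs ! j))"
  using delta0_definable_less[of n "Var i" "Var j" M E] by (simp, elim delta0_definable_cong) auto

lemma delta0_definable_eq_nth:
  "i < n \<Longrightarrow> j < n \<Longrightarrow> delta0_definable M E n (\<lambda>xs. xs ! i = xs ! j)"
  using delta0_definable_eq[of n "Var i" "Var j" M E] by (simp, elim delta0_definable_cong) auto

text \<open>The arity premise \<open>Suc n = m\<close>, rather than arity \<open>Suc n\<close>, admits numeral arities.\<close>

lemma delta0_definable_bex: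
  assumes "delta0_definable M E m Q" "Suc n = m" "vars_below n t"
  shows "delta0_definable M E n (\<lambda>xs. \<exists>a. lt M a (evt_list M xs t) \<and> Q (a # xs))"
proof -
  obtain \<phi> e where "delta0 \<phi>" "\<forall>xs. length xs = Suc n \<longrightarrow> Q xs = sat M (prepend_env xs e) E \<phi>"
    using assms(1,2) unfolding delta0_definable_def by auto
  then show ?thesis
    unfolding delta0_definable_def using assms(3)
    by (intro exI[of _ "BEx t \<phi>"] exI[of _ e]) (auto simp: evt_prepend_env prepend_env_Cons intro: delta0.intros)
qed

lemma delta0_definable_ball:
  assumes "delta0_definable M E m Q" "Suc n = m" "vars_below n t"
  shows "delta0_definable M E n (\<lambda>xs. \<forall>a. lt M a (evt_list M xs t) \<longrightarrow> Q (a # xs))"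
  using delta0_definable_not[OF delta0_definable_bex[OF delta0_definable_not[OF assms(1)] assms(2,3)]]
  by (rule delta0_definable_cong) simp

lemma delta0_definable_rename:
  assumes "delta0_definable M E m Q" "length is = m" "\<forall>i\<in>set is. i < n + length cs"
  shows "delta0_definable M E n (\<lambda>xs. Q (map ((!) (xs @ cs)) is))"
proof -
  obtain \<phi> e where \<phi>: "delta0 \<phi>" "\<forall>xs. length xs = length is \<longrightarrow> Q xs = sat M (prepend_env xs e) E \<phi>"
    using assms(1,2) unfolding delta0_definable_def by blast
  define f where "f k = (if k < length is then is ! k else n + length cs + (k - length is))" for k
  have "prepend_env (xs @ cs) e \<circ> f = prepend_env (map ((!) (xs @ cs)) is) e" if "length xs = n" for xs
    using assms(3) that by (intro ext) (auto simp: f_def prepend_env_def)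
  then show ?thesis
    unfolding delta0_definable_def using \<phi>
    by (intro exI[of _ "rename_fm f \<phi>"] exI[of _ "prepend_env cs e"])
      (auto simp: sat_rename_fm prepend_env_append intro: delta0_rename_fm)
qed

lemma delta0_definable_reindex:
  "delta0_definable M E m Q \<Longrightarrow> length is = m \<Longrightarrow> \<forall>i\<in>set is. i < n \<Longrightarrow>
   delta0_definable M E n (\<lambda>xs. Q (map ((!) xs) is))"
  using delta0_definable_rename[where cs = "[]"] by simp

lemma map_nth_upt_take: "m \<le> length xs \<Longrightarrow> map ((!) xs) [0..<m] = take m xs"
  by (rule nth_equalityI) auto

lemma map_nth_append_upt: "length xs = n \<Longrightarrow> map ((!) (xs @ ys)) [0..<n] = xs"
  by (simp add: map_nth_upt_take)

lemma length_eq_3E: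
  assumes "length xs = 3"
  obtains a b c where "xs = [a, b, c]"
  using assms by (auto simp: numeral_3_eq_3 length_Suc_conv)

lemma length_eq_4E:
  assumes "length xs = 4"
  obtains a b c d where "xs = [a, b, c, d]"
  using assms by (auto simp: numeral_eq_Suc length_Suc_conv)

lemma delta0_definable_take:
  assumes "delta0_definable M E m Q" "m \<le> n"
  shows "delta0_definable M E n (\<lambda>xs. Q (take m xs))"
proof -
  from delta0_definable_reindex[OF assms(1), of "[0..<m]" n] assms(2) show ?thesis
    by (auto elim!: delta0_definable_cong simp: map_nth_upt_take)
qed

lemma delta0_definable_append:
  assumes "delta0_definable M E (n + length cs) Q"
  shows "delta0_definable M E n (\<lambda>xs. Q (xs @ cs))"
proof -
  have "map ((!) (xs @ cs)) [0..<n + length cs] = xs @ cs" if "length xs = n" for xs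
    using map_nth[of "xs @ cs"] that by simp
  with delta0_definable_rename[OF assms, of "[0..<n + length cs]" n cs] show ?thesis
    by (auto elim: delta0_definable_cong)
qed

lemma delta0_definable_bexs:
  "delta0_definable M E (m + n) Q \<Longrightarrow> j < n \<Longrightarrow>
   delta0_definable M E n (\<lambda>xs. \<exists>zs. length zs = m \<and> (\<forall>z\<in>set zs. lt M z (xs ! j)) \<and> Q (zs @ xs))"
proof (induction m arbitrary: n j Q)
  case 0
  then show ?case by (auto elim: delta0_definable_cong)
next
  case (Suc m)
  have "delta0_definable M E (Suc n)
      (\<lambda>ys. \<exists>zs. length zs = m \<and> (\<forall>z\<in>set zs. lt M z (ys ! Suc j)) \<and> Q (zs @ ys))"
    using Suc by simp
  from delta0_definable_bex[OF this refl, of "Var j"] Suc.prems(2) show ?case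
    by (simp, elim delta0_definable_cong) (auto simp: ex_length_Suc_snoc)
qed

lemma delta0_definable_balls:
  assumes "delta0_definable M E (m + n) Q" "j < n"
  shows "delta0_definable M E n (\<lambda>xs. \<forall>zs. length zs = m \<and> (\<forall>z\<in>set zs. lt M z (xs ! j)) \<longrightarrow> Q (zs @ xs))"
  using delta0_definable_not[OF delta0_definable_bexs[OF delta0_definable_not[OF assms(1)] assms(2)]]
  by (rule delta0_definable_cong) blast

lemma delta0_definable_fix_head:
  assumes "delta0_definable M E (Suc m + 2) (\<lambda>xs. D (take (Suc m) xs) (xs ! Suc m) (xs ! Suc (Suc m)))"
  shows "delta0_definable M E (m + 2) (\<lambda>xs. D (t # take m xs) (xs ! m) (xs ! Suc m))"
  using delta0_definable_rename[OF assms, of "(m + 2) # [0..<m + 2]" "m + 2" "[t]"]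
  by (simp del: upt_Suc, elim delta0_definable_cong) (simp add: map_nth_append_upt nth_append del: upt_Suc)

lemma delta0_definable_bounded_tail:
  assumes "delta0_definable M E (Suc m + 2) (\<lambda>xs. D (take (Suc m) xs) (xs ! Suc m) (xs ! Suc (Suc m)))"
  shows "delta0_definable M E 3
    (\<lambda>xs. \<forall>ts. length ts = m \<and> (\<forall>z\<in>set ts. lt M z c) \<longrightarrow> D (xs ! 2 # ts) (xs ! 0) (xs ! 1))"
proof -
  from delta0_definable_reindex[OF assms, of "(m + 2) # [0..<m + 2]" "m + 4"]
  have "delta0_definable M E (m + 4) (\<lambda>L. D (L ! (m + 2) # take m L) (L ! m) (L ! Suc m))"
    by (simp del: upt_Suc, elim delta0_definable_cong) (simp add: map_nth_upt_take del: upt_Suc)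
  from delta0_definable_balls[OF this, of 3]
  have "delta0_definable M E (3 + length [c]) (\<lambda>ys. \<forall>zs. length zs = m \<and> (\<forall>z\<in>set zs. lt M z (ys ! 3)) \<longrightarrow>
      D ((zs @ ys) ! (m + 2) # take m (zs @ ys)) ((zs @ ys) ! m) ((zs @ ys) ! Suc m))"
    by simp
  from delta0_definable_append[OF this] show ?thesis
    by (elim delta0_definable_cong length_eq_3E) (simp add: nth_append)
qed

lemma delta0_sigma1: "delta0 p \<Longrightarrow> sigma_fm 1 p"
  unfolding One_nat_def by (auto intro: sigma_fm_pi_fm.intros)

lemma delta0_pi1: "delta0 p \<Longrightarrow> pi_fm 1 p"
  unfolding One_nat_def by (auto intro: sigma_fm_pi_fm.intros)

lemma delta0_Ex_sigma1: "delta0 p \<Longrightarrow> sigma_fm 1 (Ex p)"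
  unfolding One_nat_def by (auto intro: sigma_fm_pi_fm.intros)

lemma delta0_All_sigma2: "delta0 p \<Longrightarrow> sigma_fm 2 (All p)"
  unfolding numeral_2_eq_2 by (auto intro: sigma_fm_pi_fm.intros)

abbreviation Imp :: "fm \<Rightarrow> fm \<Rightarrow> fm" where "Imp p q \<equiv> Disj (Neg p) q"
abbreviation Iff :: "fm \<Rightarrow> fm \<Rightarrow> fm" where "Iff p q \<equiv> Conj (Imp p q) (Imp q p)"
abbreviation Le :: "tm \<Rightarrow> tm \<Rightarrow> fm" where "Le s t \<equiv> Disj (Less s t) (Eq s t)"

section \<open>Models of RCA0 with BSigma2\<close>

locale rca0_bsigma2 =
  fixes M :: "'a l2model"
  assumes RCA0: "RCA0 M" and bsigma2: "BSigma 2 M" and sets_nonempty: "sets M \<noteq> {}"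
begin

abbreviation Z where "Z \<equiv> zer M"
abbreviation sc where "sc x \<equiv> add M x (one M)"
abbreviation le where "le x y \<equiv> lt M x y \<or> x = y"
abbreviation below where "below xs x \<equiv> \<forall>y\<in>set xs. lt M y x"

lemma succ_inject [simp]: "sc m = sc n \<longleftrightarrow> m = n"
  and not_lt_zero [simp]: "\<not> lt M m Z"
  and lt_succ_iff: "lt M m (sc n) \<longleftrightarrow> le m n"
  and add_zero [simp]: "add M m Z = m"
  and add_succ [simp]: "add M m (sc n) = sc (add M m n)"
  and mul_zero [simp]: "mul M m Z = Z"
  and mul_succ [simp]: "mul M m (sc n) = add M (mul M m n) m"
  using RCA0 unfolding RCA0_def basic_axioms_def by auto

lemma sigma1_induct:
  assumes "sigma_fm 1 p" "set_env M E" "sat M (case_nat Z e) E p"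
    "\<And>n. sat M (case_nat n e) E p \<Longrightarrow> sat M (case_nat (sc n) e) E p"
  shows "sat M (case_nat n e) E p"
  using RCA0 assms unfolding RCA0_def sigma1_induction_def by blast

text \<open>Arithmetic facts are proved by induction on bounded formulas without set variables,
  for which the set environment is irrelevant.\<close>

definition any_sets :: "nat \<Rightarrow> 'a set" where
  "any_sets = (\<lambda>_. SOME X. X \<in> sets M)"

lemma arith_induct [case_names delta0 sat zero succ]:
  assumes "delta0 \<phi>" and "\<And>x. P x \<longleftrightarrow> sat M (case_nat x e) any_sets \<phi>"
    and "P Z" and "\<And>x. P x \<Longrightarrow> P (sc x)"
  shows "P x"
proof -
  have "set_env M any_sets"
    using sets_nonempty unfolding set_env_def any_sets_def by (simp add: some_in_eq)
  then show ?thesis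
    using sigma1_induct[OF delta0_sigma1 _ _, of \<phi> any_sets e x] assms by simp
qed

lemma lt_succ [simp]: "lt M a (sc a)"
  by (simp add: lt_succ_iff)

lemma lt_trans: "lt M a b \<Longrightarrow> lt M b c \<Longrightarrow> lt M a c"
  by (induction c rule: arith_induct[where e = "nth [a, b]"
        and \<phi> = "Imp (Conj (Less (Var 1) (Var 2)) (Less (Var 2) (Var 0))) (Less (Var 1) (Var 0))"])
    (auto intro!: delta0.intros simp: lt_succ_iff)

lemma lt_irrefl [simp]: "\<not> lt M a a"
proof (induction a rule: arith_induct[where e = "nth []" and \<phi> = "Neg (Less (Var 0) (Var 0))"])
  case (succ x)
  then show ?case
    by (metis lt_succ lt_succ_iff lt_trans)
qed (auto intro!: delta0.intros)

lemma zero_le: "le Z a"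
  by (induction a rule: arith_induct[where e = "nth []" and \<phi> = "Le Zero (Var 0)"])
    (auto intro!: delta0.intros simp: lt_succ_iff)

lemma succ_le_of_lt: "lt M b a \<Longrightarrow> le (sc b) a"
  by (induction a rule: arith_induct[where e = "nth [b]"
        and \<phi> = "Imp (Less (Var 1) (Var 0)) (Le (Plus (Var 1) One) (Var 0))"])
    (auto intro!: delta0.intros simp: lt_succ_iff)

lemma lt_trichotomy: "lt M a b \<or> a = b \<or> lt M b a"
  by (induction b rule: arith_induct[where e = "nth [a]"
        and \<phi> = "Disj (Less (Var 1) (Var 0)) (Disj (Eq (Var 1) (Var 0)) (Less (Var 0) (Var 1)))"])
    (use zero_le[of a] in \<open>auto intro!: delta0.intros simp: lt_succ_iff dest: succ_le_of_lt\<close>)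

lemma lt_asym: "lt M a b \<Longrightarrow> \<not> lt M b a"
  using lt_trans lt_irrefl by blast

lemma not_lt_iff_le: "\<not> lt M a b \<longleftrightarrow> le b a"
  using lt_trichotomy[of a b] lt_asym lt_irrefl by blast

lemma le_trans: "le a b \<Longrightarrow> le b c \<Longrightarrow> le a c"
  using lt_trans by blast

lemma lt_le_trans: "lt M a b \<Longrightarrow> le b c \<Longrightarrow> lt M a c"
  using lt_trans by blast

lemma le_lt_trans: "le a b \<Longrightarrow> lt M b c \<Longrightarrow> lt M a c"
  using lt_trans by blast

lemma succ_lt_succ_iff [simp]: "lt M (sc a) (sc b) \<longleftrightarrow> lt M a b"
  using lt_trans[OF lt_succ, of a] succ_le_of_lt[of a b] by (auto simp: lt_succ_iff)

lemma zero_or_succ: "a = Z \<or> (\<exists>b. a = sc b)"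
  by (induction a rule: arith_induct[where e = "nth []"
        and \<phi> = "Disj (Eq (Var 0) Zero) (BEx (Var 0) (Eq (Var 1) (Plus (Var 0) One)))"])
    (auto intro!: delta0.intros)

lemma add_zero_left [simp]: "add M Z a = a"
  by (induction a rule: arith_induct[where e = "nth []" and \<phi> = "Eq (Plus Zero (Var 0)) (Var 0)"])
    (auto intro!: delta0.intros)

lemma add_succ_left: "add M (sc a) b = sc (add M a b)"
  by (induction b rule: arith_induct[where e = "nth [a]"
        and \<phi> = "Eq (Plus (Plus (Var 1) One) (Var 0)) (Plus (Plus (Var 1) (Var 0)) One)"])
    (auto intro!: delta0.intros)

lemma add_comm: "add M a b = add M b a"
  by (induction b rule: arith_induct[where e = "nth [a]" and \<phi> = "Eq (Plus (Var 1) (Var 0)) (Plus (Var 0) (Var 1))"])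
    (auto intro!: delta0.intros simp: add_succ_left)

lemma add_assoc: "add M (add M a b) c = add M a (add M b c)"
  by (induction c rule: arith_induct[where e = "nth [a, b]"
        and \<phi> = "Eq (Plus (Plus (Var 1) (Var 2)) (Var 0)) (Plus (Var 1) (Plus (Var 2) (Var 0)))"])
    (auto intro!: delta0.intros)

lemma add_cancel: "add M a c = add M b c \<longleftrightarrow> a = b"
  by (induction c rule: arith_induct[where e = "nth [a, b]"
        and \<phi> = "Iff (Eq (Plus (Var 1) (Var 0)) (Plus (Var 2) (Var 0))) (Eq (Var 1) (Var 2))"])
    (auto intro!: delta0.intros)

lemma add_cancel_left: "add M c a = add M c b \<longleftrightarrow> a = b"
  using add_cancel[of a c b] by (simp add: add_comm)

lemma add_lt_mono: "lt M (add M a c) (add M b c) \<longleftrightarrow> lt M a b"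
  by (induction c rule: arith_induct[where e = "nth [a, b]"
        and \<phi> = "Iff (Less (Plus (Var 1) (Var 0)) (Plus (Var 2) (Var 0))) (Less (Var 1) (Var 2))"])
    (auto intro!: delta0.intros)

lemma add_lt_mono_left: "lt M (add M c a) (add M c b) \<longleftrightarrow> lt M a b"
  using add_lt_mono[of a c b] by (simp add: add_comm)

lemma le_add1: "le a (add M a b)"
  by (induction b rule: arith_induct[where e = "nth [a]" and \<phi> = "Le (Var 1) (Plus (Var 1) (Var 0))"])
    (auto intro!: delta0.intros simp: lt_succ_iff)

lemma le_add2: "le b (add M a b)"
  using le_add1[of b a] by (simp add: add_comm)

lemma lt_add_succ: "lt M a (add M a (sc b))"
  using le_lt_trans[OF le_add1 lt_succ, of a b] by simp

lemma le_add_mono: "le a b \<Longrightarrow> le c d \<Longrightarrow> le (add M a c) (add M b d)"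
  using le_trans[of "add M a c" "add M b c" "add M b d"] add_lt_mono[of a c b] add_lt_mono_left[of b c d]
  by blast

lemma mul_zero_left [simp]: "mul M Z a = Z"
  by (induction a rule: arith_induct[where e = "nth []" and \<phi> = "Eq (Times Zero (Var 0)) Zero"])
    (auto intro!: delta0.intros)

lemma mul_succ_left: "mul M (sc a) b = add M (mul M a b) b"
proof (induction b rule: arith_induct[where e = "nth [a]"
      and \<phi> = "Eq (Times (Plus (Var 1) One) (Var 0)) (Plus (Times (Var 1) (Var 0)) (Var 0))"])
  case (succ c)
  have "add M (add M (mul M a c) c) a = add M (add M (mul M a c) a) c"
    by (simp only: add_assoc add_comm[of c a])
  with succ show ?case
    by (simp add: add_succ_left)
qed (auto intro!: delta0.intros)

lemma mul_comm: "mul M a b = mul M b a"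
  by (induction b rule: arith_induct[where e = "nth [a]" and \<phi> = "Eq (Times (Var 1) (Var 0)) (Times (Var 0) (Var 1))"])
    (auto intro!: delta0.intros simp: mul_succ_left)

lemma mul_le_mono: "le a b \<Longrightarrow> le (mul M a c) (mul M b c)"
proof (induction c rule: arith_induct[where e = "nth [a, b]"
      and \<phi> = "Imp (Le (Var 1) (Var 2)) (Le (Times (Var 1) (Var 0)) (Times (Var 2) (Var 0)))"])
  case (succ x)
  then show ?case
    using le_add_mono[of "mul M a x" "mul M b x" a b] by auto
qed (auto intro!: delta0.intros)

lemma sq_le_mono: "le a b \<Longrightarrow> le (mul M a a) (mul M b b)"
proof -
  assume a: "le a b"
  have "le (mul M a a) (mul M b a)" using mul_le_mono[OF a] .
  moreover have "le (mul M a b) (mul M b b)" using mul_le_mono[OF a] .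
  ultimately show ?thesis using mul_comm[of a b] le_trans by metis
qed

lemma le_sq: "le a (mul M a a)"
proof (cases "a = Z")
  case True then show ?thesis by simp
next
  case False
  then obtain b where b: "a = sc b" using zero_or_succ by blast
  have "mul M a a = add M (mul M a b) a" by (simp add: b)
  then show ?thesis using le_add2[of a "mul M a b"] by simp
qed

lemma sq_add_lt_sq:
  assumes st: "lt M s t" and as: "le a s"
  shows "lt M (add M (mul M s s) a) (mul M t t)"
proof -
  have "le (sc s) t" using succ_le_of_lt[OF st] .
  then have 1: "le (mul M (sc s) (sc s)) (mul M t t)" by (rule sq_le_mono)
  have 2: "mul M (sc s) (sc s) = add M (add M (mul M s s) s) (sc s)"
    by (simp add: mul_succ_left)
  have 3: "le (add M (mul M s s) a) (add M (mul M s s) s)"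
    using as add_lt_mono_left[of "mul M s s" a s] by blast
  have 4: "lt M (add M (mul M s s) s) (add M (add M (mul M s s) s) (sc s))"
    by (rule lt_add_succ)
  have "lt M (add M (mul M s s) a) (mul M (sc s) (sc s))" using le_lt_trans[OF 3 4] unfolding 2 .
  then show ?thesis using lt_le_trans[OF _ 1] by blast
qed

lemma mpair_less_of_sum_less:
  assumes "lt M (add M a b) (add M a' b')"
  shows "lt M (mpair M a b) (mpair M a' b')"
  using lt_le_trans[OF sq_add_lt_sq[OF assms le_add1] le_add1] unfolding mpair_def .

lemma mpair_inject:
  assumes eq: "mpair M a b = mpair M a' b'"
  shows "a = a' \<and> b = b'"
proof -
  have sum: "add M a b = add M a' b'"
    using lt_trichotomy mpair_less_of_sum_less eq lt_irrefl by metis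
  then have "a = a'"
    using eq add_cancel_left unfolding mpair_def by metis
  with sum show ?thesis
    using add_cancel_left by blast
qed

lemma le_mpair1: "le a (mpair M a b)"
  unfolding mpair_def by (rule le_add2)

lemma le_mpair2: "le b (mpair M a b)"
proof -
  have 1: "le b (add M a b)" by (rule le_add2)
  have 2: "le (add M a b) (mul M (add M a b) (add M a b))" by (rule le_sq)
  have 3: "le (mul M (add M a b) (add M a b)) (mpair M a b)" unfolding mpair_def by (rule le_add1)
  show ?thesis using le_trans[OF le_trans[OF 1 2] 3] .
qed

lemma delta0_definable_induct:
  assumes "delta0_definable M E 1 (\<lambda>xs. P (xs ! 0))" "set_env M E" "P Z" "\<And>a. P a \<Longrightarrow> P (sc a)"
  shows "P a"
proof -
  obtain \<phi> e where \<phi>: "delta0 \<phi>" "\<forall>xs. length xs = 1 \<longrightarrow> P (xs ! 0) = sat M (prepend_env xs e) E \<phi>"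
    using assms(1) unfolding delta0_definable_def by blast
  have "P x \<longleftrightarrow> sat M (case_nat x e) E \<phi>" for x
    using \<phi>(2)[rule_format, of "[x]"] by (simp add: prepend_env_Cons)
  with \<phi>(1) show ?thesis
    using sigma1_induct[OF delta0_sigma1 assms(2)] assms(3,4) by simp
qed

lemma sigma1_definable_induct:
  assumes "delta0_definable M E 2 (\<lambda>xs. D (xs ! 0) (xs ! 1))" "set_env M E"
    "\<exists>w. D w Z" "\<And>a. \<exists>w. D w a \<Longrightarrow> \<exists>w. D w (sc a)"
  shows "\<exists>w. D w a"
proof -
  obtain \<phi> e where \<phi>: "delta0 \<phi>" "\<forall>xs. length xs = 2 \<longrightarrow> D (xs ! 0) (xs ! 1) = sat M (prepend_env xs e) E \<phi>"
    using assms(1) unfolding delta0_definable_def by blast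
  have "D w x \<longleftrightarrow> sat M (case_nat w (case_nat x e)) E \<phi>" for w x
    using \<phi>(2)[rule_format, of "[w, x]"] by (simp add: prepend_env_Cons)
  with \<phi>(1) show ?thesis
    using sigma1_induct[OF delta0_Ex_sigma1 assms(2)] assms(3,4) by simp
qed

lemma bsigma2_bounding:
  assumes "delta0_definable M E 3 (\<lambda>xs. D (xs ! 0) (xs ! 1) (xs ! 2))" "set_env M E"
    "\<And>i. lt M i u \<Longrightarrow> \<exists>j. \<forall>w. D w j i"
  shows "\<exists>v. \<forall>i. lt M i u \<longrightarrow> (\<exists>j. lt M j v \<and> (\<forall>w. D w j i))"
proof -
  obtain \<phi> e where \<phi>: "delta0 \<phi>"
    "\<forall>xs. length xs = 3 \<longrightarrow> D (xs ! 0) (xs ! 1) (xs ! 2) = sat M (prepend_env xs e) E \<phi>"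
    using assms(1) unfolding delta0_definable_def by blast
  have D: "D w j i \<longleftrightarrow> sat M (case_nat w (case_nat j (case_nat i e))) E \<phi>" for w j i
    using \<phi>(2)[rule_format, of "[w, j, i]"] by (simp add: prepend_env_Cons)
  have "sigma_fm 2 (All \<phi>)"
    by (rule delta0_All_sigma2) (rule \<phi>(1))
  then show ?thesis
    using bsigma2[unfolded BSigma_def, rule_format, where p = "All \<phi>" and e = e and E = E and u = u] assms(2,3)
    by (simp add: D)
qed

lemma delta0_comprehension:
  assumes "delta0_definable M E 1 (\<lambda>xs. P (xs ! 0))" "set_env M E"
  shows "\<exists>X\<in>sets M. \<forall>n. n \<in> X \<longleftrightarrow> P n"
proof -
  obtain \<phi> e where \<phi>: "delta0 \<phi>" "\<forall>xs. length xs = 1 \<longrightarrow> P (xs ! 0) = sat M (prepend_env xs e) E \<phi>"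
    using assms(1) unfolding delta0_definable_def by blast
  have "P x \<longleftrightarrow> sat M (case_nat x e) E \<phi>" for x
    using \<phi>(2)[rule_format, of "[x]"] by (simp add: prepend_env_Cons)
  with \<phi>(1) show ?thesis
    using RCA0 delta0_sigma1 delta0_pi1 assms(2)
    unfolding RCA0_def delta1_comprehension_def by simp blast
qed

lemma delta0_definable_least:
  assumes P: "delta0_definable M E 1 (\<lambda>xs. P (xs ! 0))" and E: "set_env M E" and "P a"
  shows "\<exists>b. P b \<and> (\<forall>c. lt M c b \<longrightarrow> \<not> P c)"
proof -
  have P_head: "delta0_definable M E n (\<lambda>xs. P (xs ! 0))" if "0 < n" for n
    using delta0_definable_reindex[OF P, of "[0]" n] that by (auto elim!: delta0_definable_cong)
  have "delta0_definable M E 2 (\<lambda>xs. \<forall>c. lt M c (xs ! 0) \<longrightarrow> \<not> P c)"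
    using delta0_definable_ball[OF delta0_definable_not[OF P_head[of 3]], where n = 2 and t = "Var 0"]
    by (simp, elim delta0_definable_cong) auto
  with P_head[of 2] have "delta0_definable M E 2 (\<lambda>xs. P (xs ! 0) \<and> (\<forall>c. lt M c (xs ! 0) \<longrightarrow> \<not> P c))"
    by (simp add: delta0_definable_conj)
  from delta0_definable_bex[OF this, where n = 1 and t = "Var 0"]
  have "delta0_definable M E 1 (\<lambda>xs. \<exists>b. lt M b (xs ! 0) \<and> P b \<and> (\<forall>c. lt M c b \<longrightarrow> \<not> P c))"
    by (simp, elim delta0_definable_cong) auto
  moreover have "delta0_definable M E 1 (\<lambda>xs. \<exists>a. lt M a (xs ! 0) \<and> P a)"
    using delta0_definable_bex[OF P_head[of 2], where n = 1 and t = "Var 0"]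
    by (simp, elim delta0_definable_cong) auto
  ultimately have "delta0_definable M E 1 (\<lambda>xs. (\<exists>a. lt M a (xs ! 0) \<and> P a) \<longrightarrow>
      (\<exists>b. lt M b (xs ! 0) \<and> P b \<and> (\<forall>c. lt M c b \<longrightarrow> \<not> P c)))"
    by (rule delta0_definable_imp[rotated])
  from delta0_definable_induct[OF this E]
  have "(\<exists>a. lt M a n \<and> P a) \<longrightarrow> (\<exists>b. lt M b n \<and> P b \<and> (\<forall>c. lt M c b \<longrightarrow> \<not> P c))" for n
    by (simp add: lt_succ_iff) blast
  then show ?thesis
    using \<open>P a\<close> lt_succ by blast
qed

lemma list_bounded: "\<exists>B. below xs B"
proof (induction xs)
  case (Cons a xs)
  then obtain B where "below xs B" by blast
  then show ?case
    using lt_trans not_lt_iff_le lt_succ_iff by (metis set_ConsD)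
qed simp

lemma common_bound: "\<exists>B. lt M x B \<and> lt M y B"
  using list_bounded[of "[x, y]"] by auto

lemma bsigma2_bounding_tuples:
  assumes "delta0_definable M E (m + 2) (\<lambda>xs. D (take m xs) (xs ! m) (xs ! Suc m))" and E: "set_env M E"
    and "\<And>ts n n' w. length ts = m \<Longrightarrow> le n n' \<Longrightarrow> \<forall>w. D ts w n \<Longrightarrow> D ts w n'"
    and "\<And>ts. length ts = m \<Longrightarrow> below ts c \<Longrightarrow> \<exists>n. \<forall>w. D ts w n"
  shows "\<exists>N. \<forall>ts w. length ts = m \<longrightarrow> below ts c \<longrightarrow> D ts w N"
  using assms(1,3,4)
proof (induction m arbitrary: D)
  case 0
  then show ?case by fastforce
next
  case (Suc m)
  have IH: "\<exists>N. \<forall>ts w. length ts = m \<longrightarrow> below ts c \<longrightarrow> D (t # ts) w N" if "lt M t c" for t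
  proof (rule Suc.IH)
    show "delta0_definable M E (m + 2) (\<lambda>xs. D (t # take m xs) (xs ! m) (xs ! Suc m))"
      by (rule delta0_definable_fix_head[OF Suc.prems(1)])
  next
    fix ts n n' w
    assume "length ts = m" "le n n'" "\<forall>w. D (t # ts) w n"
    then show "D (t # ts) w n'"
      using Suc.prems(2)[of "t # ts"] by simp
  next
    fix ts
    assume "length ts = m" "below ts c"
    then show "\<exists>n. \<forall>w. D (t # ts) w n"
      using Suc.prems(3)[of "t # ts"] that by simp
  qed
  have "\<exists>j. \<forall>w ts. length ts = m \<and> below ts c \<longrightarrow> D (t # ts) w j" if "lt M t c" for t
    using IH[OF that] by blast
  with bsigma2_bounding[where D = "\<lambda>w j t. \<forall>ts. length ts = m \<and> below ts c \<longrightarrow> D (t # ts) w j", OF delta0_definable_bounded_tail[OF Suc.prems(1)] E, of c]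
  obtain V where V: "\<forall>t. lt M t c \<longrightarrow> (\<exists>j. lt M j V \<and> (\<forall>w ts. length ts = m \<and> below ts c \<longrightarrow> D (t # ts) w j))"
    by blast
  show ?case
  proof (intro exI allI impI)
    fix ts w
    assume "length ts = Suc m" "below ts c"
    then obtain t zs where ts: "ts = t # zs" "length zs = m" "lt M t c" "below zs c"
      by (auto simp: length_Suc_conv)
    with V obtain j where "lt M j V" "\<forall>w. D (t # zs) w j"
      by blast
    then show "D ts w V"
      using Suc.prems(2)[of ts j V w] ts by simp
  qed
qed

end

section \<open>The bounded infinity principle from BSigma3\<close>

lemma (in rca0_bsigma2) bounded_inf_principle_of_bsigma3:
  assumes "BSigma 3 M"
  shows "bounded_inf_principle M"
  unfolding bounded_inf_principle_def
proof (intro allI ballI impI)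
  fix u H
  assume H: "H \<in> sets M" and hyps: "is_fun2 M H u \<and> (\<forall>x. lt M x u \<longrightarrow> (\<exists>m. inf_many M (\<lambda>z. val_lt M H x z m)))"
  \<comment> \<open>\<open>p(i, j)\<close>: for every \<open>K\<close> there are \<open>z > K\<close> and \<open>y < j\<close> with \<open>((i, z), y) \<in> H\<close>\<close>
  define p where "p = All (Ex (Ex (Conj (Less (Var 2) (Var 1))
    (Conj (Mem (mpair_tm (mpair_tm (Var 4) (Var 1)) (Var 0)) 0) (Less (Var 0) (Var 3))))))"
  have "sigma_fm 3 p"
    unfolding p_def numeral_3_eq_3 by (intro sigma_fm_pi_fm.intros delta0.intros)
  moreover have "set_env M (\<lambda>_. H)"
    using H by (simp add: set_env_def)
  moreover have "sat M (case_nat j (case_nat i (\<lambda>_. Z))) (\<lambda>_. H) p \<longleftrightarrow> inf_many M (\<lambda>z. val_lt M H i z j)" for i j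
    unfolding p_def inf_many_def val_lt_def by (auto simp: mpair_tm_def mpair_def)
  ultimately obtain v where "\<forall>i. lt M i u \<longrightarrow> (\<exists>j. lt M j v \<and> inf_many M (\<lambda>z. val_lt M H i z j))"
    using assms[unfolded BSigma_def, rule_format, where p = p and e = "\<lambda>_. Z" and E = "\<lambda>_. H" and u = u] hyps
    by auto
  then show "\<exists>m. \<forall>x. lt M x u \<longrightarrow> inf_many M (\<lambda>z. val_lt M H x z m)"
    unfolding inf_many_def val_lt_def by (meson lt_trans)
qed

section \<open>BSigma3 from the bounded infinity principle\<close>

locale sigma3_formula = rca0_bsigma2 +
  fixes E :: "nat \<Rightarrow> 'a set" and e :: "nat \<Rightarrow> 'a" and \<delta> :: fm and k b c :: nat
  assumes set_env: "set_env M E" and delta0_matrix: "delta0 \<delta>"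
begin

definition matrix :: "'a list \<Rightarrow> bool" where
  "matrix L \<longleftrightarrow> sat M (prepend_env L e) E \<delta>"

lemma matrix_definable: "delta0_definable M E n matrix"
  using delta0_definable_sat[OF delta0_matrix] by (simp add: matrix_def[abs_def])

lemma sat_normal_form:
  "sat M (case_nat j (case_nat i e)) E (Exs k (Alls b (Exs c \<delta>))) \<longleftrightarrow>
   (\<exists>xs. length xs = k \<and> (\<forall>ys. length ys = b \<longrightarrow> (\<exists>zs. length zs = c \<and> matrix (zs @ ys @ xs @ [j, i]))))"
proof -
  have "case_nat j (case_nat i e) = prepend_env [j, i] e"
    by (simp add: prepend_env_Cons)
  then show ?thesis
    by (simp add: sat_Exs sat_Alls matrix_def prepend_env_append)
qed

text \<open>The value \<open>j\<close> of the Sigma3 formula is the last entry of the outer block \<open>t\<close>.\<close>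

definition witness_below :: "'a \<Rightarrow> 'a \<Rightarrow> bool" where
  "witness_below i J \<longleftrightarrow> (\<exists>t. length t = Suc k \<and> below t J \<and>
     (\<forall>ys. length ys = b \<longrightarrow> (\<exists>zs. length zs = c \<and> matrix (zs @ ys @ t @ [i]))))"

lemma witness_below_of_sat:
  assumes "sat M (case_nat j (case_nat i e)) E (Exs k (Alls b (Exs c \<delta>)))"
  shows "\<exists>J. witness_below i J"
proof -
  obtain xs where "length xs = k" "\<forall>ys. length ys = b \<longrightarrow> (\<exists>zs. length zs = c \<and> matrix (zs @ ys @ xs @ [j, i]))"
    using assms sat_normal_form by blast
  moreover obtain J where "below (xs @ [j]) J"
    using list_bounded by blast
  ultimately show ?thesis
    unfolding witness_below_def by (intro exI[of _ J] exI[of _ "xs @ [j]"]) auto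
qed

lemma sat_of_witness_below:
  assumes "witness_below i J"
  shows "\<exists>j. lt M j J \<and> sat M (case_nat j (case_nat i e)) E (Exs k (Alls b (Exs c \<delta>)))"
proof -
  obtain t where t: "length t = Suc k" "below t J"
    "\<forall>ys. length ys = b \<longrightarrow> (\<exists>zs. length zs = c \<and> matrix (zs @ ys @ t @ [i]))"
    using assms unfolding witness_below_def by blast
  then obtain xs j where "t = xs @ [j]" "length xs = k"
    by (auto simp: length_Suc_conv_rev)
  with t show ?thesis
    unfolding sat_normal_form by auto
qed

definition inner_witness :: "'a \<Rightarrow> 'a list \<Rightarrow> 'a list \<Rightarrow> 'a \<Rightarrow> bool" where
  "inner_witness i t ys s \<longleftrightarrow> (\<exists>zs. length zs = c \<and> below zs s \<and> matrix (zs @ ys @ t @ [i]))"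

definition covered :: "'a \<Rightarrow> 'a list \<Rightarrow> 'a \<Rightarrow> 'a \<Rightarrow> bool" where
  "covered i t l s \<longleftrightarrow> (\<forall>ys. length ys = b \<and> below ys l \<longrightarrow> inner_witness i t ys s)"

definition witnessed :: "'a \<Rightarrow> 'a \<Rightarrow> 'a \<Rightarrow> 'a \<Rightarrow> bool" where
  "witnessed i J l s \<longleftrightarrow> lt M l s \<and> (\<exists>t. length t = Suc k \<and> below t J \<and> covered i t l s)"

lemma inner_witness_mono: "inner_witness i t ys s \<Longrightarrow> le s s' \<Longrightarrow> inner_witness i t ys s'"
  unfolding inner_witness_def using lt_le_trans by blast

lemma covered_mono:
  assumes "covered i t l s" "le l' l" "le s s'"
  shows "covered i t l' s'"
  unfolding covered_def
proof (intro allI impI)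
  fix ys
  assume "length ys = b \<and> below ys l'"
  then have "inner_witness i t ys s"
    using assms(1,2) lt_le_trans unfolding covered_def by blast
  then show "inner_witness i t ys s'"
    using assms(3) by (rule inner_witness_mono)
qed

lemma witnessed_mono:
  assumes "witnessed i J l s" "le l' l" "le s s'"
  shows "witnessed i J l' s'"
proof -
  have "lt M l' s'"
    using assms le_lt_trans lt_le_trans unfolding witnessed_def by blast
  then show ?thesis
    using assms(1) covered_mono[OF _ assms(2,3)] unfolding witnessed_def by blast
qed

lemma inner_witness_definable:
  "delta0_definable M E (b + 2) (\<lambda>L. inner_witness i t (take b L) (L ! Suc b))"
proof -
  have "delta0_definable M E (c + b) (\<lambda>L. matrix (L @ t @ [i]))"
    using delta0_definable_append[OF matrix_definable] by simp
  from delta0_definable_bexs[OF delta0_definable_take[OF this, of "c + (b + 2)"], of "Suc b"] show ?thesis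
    by (simp, elim delta0_definable_cong) (simp add: inner_witness_def cong: conj_cong)
qed

lemma covered_definable:
  "delta0_definable M E (Suc k + 2) (\<lambda>L. covered i (take (Suc k) L) (L ! Suc (Suc k)) (L ! Suc k))"
proof -
  have "delta0_definable M E (c + b + Suc k) (\<lambda>L. matrix (L @ [i]))"
    using delta0_definable_append[OF matrix_definable] by simp
  from delta0_definable_take[OF this, of "c + (b + (Suc k + 2))"]
  have "delta0_definable M E (c + (b + (Suc k + 2))) (\<lambda>L. matrix (take (c + b + Suc k) L @ [i]))"
    by simp
  from delta0_definable_balls[OF delta0_definable_bexs[OF this, of "b + Suc k"], of "Suc (Suc k)"] show ?thesis
    by (simp, elim delta0_definable_cong)
      (simp add: covered_def inner_witness_def nth_append cong: conj_cong)
qed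

lemma witnessed_definable: "delta0_definable M E 4 (\<lambda>xs. witnessed (xs ! 0) (xs ! 1) (xs ! 2) (xs ! 3))"
proof -
  define N where "N = c + b + Suc k + 1"
  have "delta0_definable M E (c + (b + (Suc k + 4))) (\<lambda>L. matrix (take N L))"
    by (rule delta0_definable_take[OF matrix_definable]) (simp add: N_def)
  from delta0_definable_bexs[OF this, of "b + Suc k + 3"]
  have "delta0_definable M E (b + (Suc k + 4))
      (\<lambda>ws. \<exists>zs. length zs = c \<and> below zs (ws ! (b + Suc k + 3)) \<and> matrix (take N (zs @ ws)))"
    by simp
  from delta0_definable_balls[OF this, of "Suc k + 2"]
  have "delta0_definable M E (Suc k + 4) (\<lambda>vs. \<forall>ys. length ys = b \<and> below ys (vs ! (Suc k + 2)) \<longrightarrow>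
      (\<exists>zs. length zs = c \<and> below zs ((ys @ vs) ! (b + Suc k + 3)) \<and> matrix (take N (zs @ ys @ vs))))"
    by simp
  from delta0_definable_bexs[OF this, of 1]
  have "delta0_definable M E 4 (\<lambda>xs. \<exists>t. length t = Suc k \<and> below t (xs ! 1) \<and>
      (\<forall>ys. length ys = b \<and> below ys ((t @ xs) ! (Suc k + 2)) \<longrightarrow>
        (\<exists>zs. length zs = c \<and> below zs ((ys @ t @ xs) ! (b + Suc k + 3)) \<and> matrix (take N (zs @ ys @ t @ xs)))))"
    by simp
  from delta0_definable_conj[OF delta0_definable_less_nth[of 2 4 3 M E, simplified] this] show ?thesis
    by (elim delta0_definable_cong length_eq_4E)
      (auto simp: witnessed_def covered_def inner_witness_def N_def nth_append cong: conj_cong)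
qed

lemma witnessed_of_witness_below:
  assumes "witness_below i J"
  shows "\<exists>s. witnessed i J l s"
proof -
  obtain t where t: "length t = Suc k" "below t J"
    and inner: "\<forall>ys. length ys = b \<longrightarrow> (\<exists>zs. length zs = c \<and> matrix (zs @ ys @ t @ [i]))"
    using assms unfolding witness_below_def by blast
  have "\<exists>N. \<forall>ys (w :: 'a). length ys = b \<longrightarrow> below ys l \<longrightarrow> inner_witness i t ys N"
  proof (rule bsigma2_bounding_tuples)
    show "delta0_definable M E (b + 2) (\<lambda>L. inner_witness i t (take b L) (L ! Suc b))"
      by (rule inner_witness_definable)
    show "set_env M E"
      by (rule set_env)
  next
    fix ys :: "'a list"
    assume "length ys = b"
    then obtain zs where "length zs = c" "matrix (zs @ ys @ t @ [i])"
      using inner by blast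
    moreover obtain n where "below zs n"
      using list_bounded by blast
    ultimately show "\<exists>n. \<forall>w :: 'a. inner_witness i t ys n"
      unfolding inner_witness_def by blast
  next
    fix ys n n' and w :: 'a
    assume "le n n'" "\<forall>w :: 'a. inner_witness i t ys n"
    then show "inner_witness i t ys n'"
      using inner_witness_mono by blast
  qed
  then obtain N where N: "\<And>ys. length ys = b \<Longrightarrow> below ys l \<Longrightarrow> inner_witness i t ys N"
    by blast
  obtain s where s: "lt M l s" "lt M N s"
    using common_bound by blast
  have "covered i t l s"
    unfolding covered_def using N inner_witness_mono[OF _ disjI1[OF s(2)]] by blast
  with t s(1) show ?thesis
    unfolding witnessed_def by blast
qed

lemma witness_below_of_witnessed:
  assumes "\<And>l. \<exists>s. witnessed i J l s"
  shows "witness_below i J"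
proof (rule ccontr)
  assume no_witness: "\<not> witness_below i J"
  have "\<exists>N. \<forall>ts s. length ts = Suc k \<longrightarrow> below ts J \<longrightarrow> \<not> covered i ts N s"
  proof (rule bsigma2_bounding_tuples)
    show "delta0_definable M E (Suc k + 2) (\<lambda>L. \<not> covered i (take (Suc k) L) (L ! Suc (Suc k)) (L ! Suc k))"
      by (rule delta0_definable_not[OF covered_definable])
    show "set_env M E"
      by (rule set_env)
  next
    fix ts
    assume "length ts = Suc k" "below ts J"
    then obtain ys where "length ys = b" "\<forall>zs. length zs = c \<longrightarrow> \<not> matrix (zs @ ys @ ts @ [i])"
      using no_witness unfolding witness_below_def by blast
    moreover obtain n where "below ys n"
      using list_bounded by blast
    ultimately show "\<exists>n. \<forall>s. \<not> covered i ts n s"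
      unfolding covered_def inner_witness_def by blast
  next
    fix ts n n' s
    assume "le n n'" "\<forall>s. \<not> covered i ts n s"
    then show "\<not> covered i ts n' s"
      using covered_mono[of i ts n' s n s] by blast
  qed
  then obtain N where "\<And>ts s. length ts = Suc k \<Longrightarrow> below ts J \<Longrightarrow> \<not> covered i ts N s"
    by blast
  with assms[of N] show False
    unfolding witnessed_def by blast
qed

lemma witness_below_iff_witnessed: "witness_below i J \<longleftrightarrow> (\<forall>l. \<exists>s. witnessed i J l s)"
  using witnessed_of_witness_below witness_below_of_witnessed by meson

text \<open>\<open>s\<close> is a \<open>J\<close>-jump if it is the least search bound with which some level \<open>l < s\<close> is witnessed.\<close>

definition jump :: "'a \<Rightarrow> 'a \<Rightarrow> 'a \<Rightarrow> bool" where
  "jump i J s \<longleftrightarrow> (\<exists>s'. lt M s' s \<and> s = sc s' \<and> (\<exists>l. lt M l s \<and> witnessed i J l s \<and> \<not> witnessed i J l s'))"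

lemma jump_definable: "delta0_definable M E 3 (\<lambda>xs. jump (xs ! 0) (xs ! 1) (xs ! 2))"
proof -
  have "delta0_definable M E 5 (\<lambda>L. witnessed (L ! 2) (L ! 3) (L ! 0) (L ! 4) \<and> \<not> witnessed (L ! 2) (L ! 3) (L ! 0) (L ! 1))"
    using delta0_definable_reindex[OF witnessed_definable, of "[2, 3, 0, 4]" 5]
      delta0_definable_reindex[OF witnessed_definable, of "[2, 3, 0, 1]" 5]
    by (simp add: delta0_definable_conj delta0_definable_not)
  from delta0_definable_bex[OF this, where n = 4 and t = "Var 3"]
  have "delta0_definable M E 4 (\<lambda>L. \<exists>l. lt M l (L ! 3) \<and> witnessed (L ! 1) (L ! 2) l (L ! 3) \<and> \<not> witnessed (L ! 1) (L ! 2) l (L ! 0))"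
    by (simp, elim delta0_definable_cong) auto
  with delta0_definable_eq[of 4 "Var 3" "Plus (Var 0) One" M E]
  have "delta0_definable M E 4 (\<lambda>L. L ! 3 = sc (L ! 0) \<and> (\<exists>l. lt M l (L ! 3) \<and> witnessed (L ! 1) (L ! 2) l (L ! 3) \<and> \<not> witnessed (L ! 1) (L ! 2) l (L ! 0)))"
    by (simp, elim delta0_definable_conj[THEN delta0_definable_cong]) auto
  from delta0_definable_bex[OF this, where n = 3 and t = "Var 2"] show ?thesis
    by (simp, elim delta0_definable_cong) (auto simp: jump_def)
qed

lemma unbounded_jumps_of_witnessed:
  assumes "\<And>l. \<exists>s. witnessed i J l s"
  shows "\<exists>s. lt M K s \<and> jump i J s"
proof -
  have "delta0_definable M E 1 (\<lambda>xs. witnessed i J K (xs ! 0))"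
    using delta0_definable_rename[OF witnessed_definable, of "[1, 2, 3, 0]" 1 "[i, J, K]"]
    by (simp, elim delta0_definable_cong) (auto simp: nth_append)
  from delta0_definable_least[OF this set_env] assms
  obtain s where s: "witnessed i J K s" "\<And>s'. lt M s' s \<Longrightarrow> \<not> witnessed i J K s'"
    by blast
  then have "lt M K s"
    unfolding witnessed_def by blast
  moreover obtain s' where "s = sc s'"
    using zero_or_succ[of s] \<open>lt M K s\<close> not_lt_zero by blast
  ultimately show ?thesis
    unfolding jump_def using s by (intro exI[of _ s] conjI exI[of _ s'] exI[of _ K]) auto
qed

lemma witnessed_of_unbounded_jumps:
  assumes jumps: "\<And>K. \<exists>s. lt M K s \<and> jump i J s"
  shows "\<exists>s. witnessed i J l s"
proof (rule sigma1_definable_induct[OF _ set_env])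
  show "delta0_definable M E 2 (\<lambda>xs. witnessed i J (xs ! 1) (xs ! 0))"
    using delta0_definable_rename[OF witnessed_definable, of "[2, 3, 1, 0]" 2 "[i, J]"]
    by (simp, elim delta0_definable_cong) (auto simp: nth_append)
next
  obtain s l where "jump i J s" "witnessed i J l s"
    using jumps[of Z] unfolding jump_def by blast
  then show "\<exists>s. witnessed i J Z s"
    using witnessed_mono[OF _ zero_le, of i J l s s] by blast
next
  fix n
  assume "\<exists>w. witnessed i J n w"
  then obtain w where w: "witnessed i J n w" ..
  obtain r r' l where r: "lt M w r" "r = sc r'" "witnessed i J l r" "\<not> witnessed i J l r'"
    using jumps[of w] unfolding jump_def by blast
  have "le w r'"
    using r(1,2) lt_succ_iff by blast
  then have n_r': "witnessed i J n r'"
    using witnessed_mono[OF w] by blast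
  have "lt M n l"
  proof (rule ccontr)
    assume "\<not> lt M n l"
    then have "witnessed i J l r'"
      using witnessed_mono[OF n_r'] not_lt_iff_le by blast
    with r(4) show False ..
  qed
  then show "\<exists>w. witnessed i J (sc n) w"
    using witnessed_mono[OF r(3) succ_le_of_lt] by blast
qed

lemma witnessed_iff_unbounded_jumps:
  "(\<forall>l. \<exists>s. witnessed i J l s) \<longleftrightarrow> (\<forall>K. \<exists>s. lt M K s \<and> jump i J s)"
  using unbounded_jumps_of_witnessed witnessed_of_unbounded_jumps by blast

text \<open>The function of the bounded infinity principle: h(i, s) is the least \<open>J\<close> such that \<open>s\<close> is
  a \<open>J\<close>-jump, and \<open>s\<close> itself if there is none; \<open>h_graph i s y\<close> says h(i, s) = y.\<close>

definition jump_or_self :: "'a \<Rightarrow> 'a \<Rightarrow> 'a \<Rightarrow> bool" where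
  "jump_or_self i s y \<longleftrightarrow> jump i y s \<or> y = s"

definition h_graph :: "'a \<Rightarrow> 'a \<Rightarrow> 'a \<Rightarrow> bool" where
  "h_graph i s y \<longleftrightarrow> jump_or_self i s y \<and> (\<forall>y'. lt M y' y \<longrightarrow> \<not> jump_or_self i s y')"

definition graph_code :: "'a \<Rightarrow> 'a \<Rightarrow> bool" where
  "graph_code u w \<longleftrightarrow> (\<exists>x. lt M x (sc w) \<and> (\<exists>z. lt M z (sc w) \<and> (\<exists>y. lt M y (sc w) \<and>
     w = mpair M (mpair M x z) y \<and> lt M x u \<and> h_graph x z y)))"

lemma jump_or_self_definable: "delta0_definable M E 3 (\<lambda>xs. jump_or_self (xs ! 0) (xs ! 1) (xs ! 2))"
  using delta0_definable_disj[OF delta0_definable_reindex[OF jump_definable, of "[0, 2, 1]" 3]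
      delta0_definable_eq_nth[of 2 3 1]]
  by (simp, elim delta0_definable_cong) (simp add: jump_or_self_def)

lemma h_graph_definable: "delta0_definable M E 3 (\<lambda>xs. h_graph (xs ! 0) (xs ! 1) (xs ! 2))"
proof -
  from delta0_definable_reindex[OF jump_or_self_definable, of "[1, 2, 0]" 4]
  have "delta0_definable M E 4 (\<lambda>L. \<not> jump_or_self (L ! 1) (L ! 2) (L ! 0))"
    by (simp add: delta0_definable_not)
  from delta0_definable_ball[OF this, where n = 3 and t = "Var 2"]
  have "delta0_definable M E 3 (\<lambda>xs. \<forall>y'. lt M y' (xs ! 2) \<longrightarrow> \<not> jump_or_self (xs ! 0) (xs ! 1) y')"
    by (simp, elim delta0_definable_cong) auto
  from delta0_definable_conj[OF jump_or_self_definable this] show ?thesis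
    by (simp add: h_graph_def)
qed

lemma graph_code_definable: "delta0_definable M E 1 (\<lambda>xs. graph_code u (xs ! 0))"
proof -
  have "delta0_definable M E 4 (\<lambda>L. L ! 3 = mpair M (mpair M (L ! 2) (L ! 1)) (L ! 0))"
    using delta0_definable_eq[of 4 "Var 3" "mpair_tm (mpair_tm (Var 2) (Var 1)) (Var 0)" M E]
    by (simp, elim delta0_definable_cong) auto
  moreover have "delta0_definable M E 4 (\<lambda>L. lt M (L ! 2) u)"
    using delta0_definable_append[OF delta0_definable_less_nth[of 2 "4 + length [u]" 4], of M E]
    by (simp, elim delta0_definable_cong) (simp add: nth_append)
  moreover have "delta0_definable M E 4 (\<lambda>L. h_graph (L ! 2) (L ! 1) (L ! 0))"
    using delta0_definable_reindex[OF h_graph_definable, of "[2, 1, 0]" 4] by simp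
  ultimately have "delta0_definable M E 4 (\<lambda>L. L ! 3 = mpair M (mpair M (L ! 2) (L ! 1)) (L ! 0) \<and>
      lt M (L ! 2) u \<and> h_graph (L ! 2) (L ! 1) (L ! 0))"
    by (intro delta0_definable_conj)
  from delta0_definable_bex[OF this, where n = 3 and t = "Plus (Var 2) One"]
  have "delta0_definable M E 3 (\<lambda>L. \<exists>y. lt M y (sc (L ! 2)) \<and> L ! 2 = mpair M (mpair M (L ! 1) (L ! 0)) y \<and>
      lt M (L ! 1) u \<and> h_graph (L ! 1) (L ! 0) y)"
    by (simp, elim delta0_definable_cong) auto
  from delta0_definable_bex[OF this, where n = 2 and t = "Plus (Var 1) One"]
  have "delta0_definable M E 2 (\<lambda>L. \<exists>z. lt M z (sc (L ! 1)) \<and> (\<exists>y. lt M y (sc (L ! 1)) \<and>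
      L ! 1 = mpair M (mpair M (L ! 0) z) y \<and> lt M (L ! 0) u \<and> h_graph (L ! 0) z y))"
    by (simp, elim delta0_definable_cong) auto
  from delta0_definable_bex[OF this, where n = 1 and t = "Plus (Var 0) One"] show ?thesis
    by (simp, elim delta0_definable_cong) (auto simp: graph_code_def)
qed

lemma h_graph_exists: "\<exists>y. h_graph i s y"
proof -
  have "delta0_definable M E 1 (\<lambda>xs. jump_or_self i s (xs ! 0))"
    using delta0_definable_rename[OF jump_or_self_definable, of "[1, 2, 0]" 1 "[i, s]"]
    by (simp, elim delta0_definable_cong) (auto simp: nth_append)
  from delta0_definable_least[OF this set_env, of s] show ?thesis
    unfolding h_graph_def jump_or_self_def by blast
qed

lemma h_graph_unique: "h_graph i s y \<Longrightarrow> h_graph i s y' \<Longrightarrow> y = y'"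
  unfolding h_graph_def using lt_trichotomy by blast

lemma h_graph_le_jump: "h_graph i s y \<Longrightarrow> jump i J s \<Longrightarrow> le y J"
  unfolding h_graph_def jump_or_self_def using not_lt_iff_le by blast

lemma graph_code_mpair_iff:
  assumes "lt M x u"
  shows "graph_code u (mpair M (mpair M x z) y) \<longleftrightarrow> h_graph x z y"
proof
  assume "graph_code u (mpair M (mpair M x z) y)"
  then obtain x' z' y' where eq: "mpair M (mpair M x z) y = mpair M (mpair M x' z') y'"
    and "h_graph x' z' y'"
    unfolding graph_code_def by blast
  moreover have "x = x'" "z = z'" "y = y'"
    using mpair_inject[OF eq] mpair_inject by blast+
  ultimately show "h_graph x z y"
    by simp
next
  let ?w = "mpair M (mpair M x z) y"
  assume "h_graph x z y"
  moreover have "le x ?w" "le z ?w" "le y ?w"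
    using le_trans[OF le_mpair1 le_mpair1] le_trans[OF le_mpair2 le_mpair1] le_mpair2 by blast+
  ultimately show "graph_code u ?w"
    unfolding graph_code_def lt_succ_iff using assms by blast
qed

context
  fixes u X
  assumes X_graph: "\<And>w. w \<in> X \<longleftrightarrow> graph_code u w"
begin

lemma is_fun2_graph: "is_fun2 M X u"
  unfolding is_fun2_def
proof (intro conjI ballI allI impI)
  fix w
  assume "w \<in> X"
  then show "\<exists>x z y. lt M x u \<and> w = mpair M (mpair M x z) y"
    using X_graph unfolding graph_code_def by blast
next
  fix x z
  assume "lt M x u"
  moreover obtain y where "h_graph x z y"
    using h_graph_exists by blast
  ultimately show "\<exists>!y. mpair M (mpair M x z) y \<in> X"
    using X_graph graph_code_mpair_iff h_graph_unique by blast
qed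

lemma val_lt_graph_iff: "lt M x u \<Longrightarrow> val_lt M X x z m \<longleftrightarrow> (\<exists>y. h_graph x z y \<and> lt M y m)"
  unfolding val_lt_def using X_graph graph_code_mpair_iff by simp

lemma inf_many_val_lt_of_jumps:
  assumes "lt M i u" and jumps: "\<And>K. \<exists>s. lt M K s \<and> jump i J s"
  shows "inf_many M (\<lambda>z. val_lt M X i z (sc J))"
  unfolding inf_many_def
proof
  fix K
  obtain s where s: "lt M K s" "jump i J s"
    using jumps by blast
  obtain y where "h_graph i s y"
    using h_graph_exists by blast
  with s show "\<exists>z. lt M K z \<and> val_lt M X i z (sc J)"
    using val_lt_graph_iff[OF assms(1)] h_graph_le_jump lt_succ_iff by blast
qed

lemma jumps_of_inf_many_val_lt:
  assumes "lt M i u" and inf: "inf_many M (\<lambda>z. val_lt M X i z m)"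
  shows "\<exists>J. lt M J m \<and> (\<forall>K. \<exists>s. lt M K s \<and> jump i J s)"
proof (rule ccontr)
  assume "\<not> ?thesis"
  then have bounded: "\<exists>j. \<forall>s. lt M j s \<longrightarrow> \<not> jump i J s" if "lt M J m" for J
    using that by (meson not_lt_iff_le)
  have "\<exists>v. \<forall>J. lt M J m \<longrightarrow> (\<exists>j. lt M j v \<and> (\<forall>s. lt M j s \<longrightarrow> \<not> jump i J s))"
  proof (rule bsigma2_bounding[OF _ set_env])
    show "delta0_definable M E 3 (\<lambda>xs. lt M (xs ! 1) (xs ! 0) \<longrightarrow> \<not> jump i (xs ! 2) (xs ! 0))"
      using delta0_definable_imp[OF delta0_definable_less_nth[of 1 3 0]
          delta0_definable_not[OF delta0_definable_rename[OF jump_definable, of "[3, 2, 0]" 3 "[i]"]]]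
      by (simp, elim delta0_definable_cong) (auto simp: nth_append)
  qed (use bounded in blast)
  then obtain v where v: "\<And>J. lt M J m \<Longrightarrow> \<exists>j. lt M j v \<and> (\<forall>s. lt M j s \<longrightarrow> \<not> jump i J s)"
    by blast
  obtain K where K: "lt M v K" "lt M m K"
    using common_bound by blast
  obtain z y where z: "lt M K z" "h_graph i z y" "lt M y m"
    using inf val_lt_graph_iff[OF assms(1)] unfolding inf_many_def by blast
  then have "jump i y z"
    using lt_trans[OF z(3) lt_trans[OF K(2) z(1)]] unfolding h_graph_def jump_or_self_def by auto
  moreover obtain j where "lt M j v" "\<forall>s. lt M j s \<longrightarrow> \<not> jump i y s"
    using v[OF z(3)] by blast
  ultimately show False
    using lt_trans[OF lt_trans[OF \<open>lt M j v\<close> K(1)] z(1)] by blast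
qed

end

lemma bounding_of_bounded_inf_principle:
  assumes principle: "bounded_inf_principle M"
    and total: "\<forall>i. lt M i u \<longrightarrow> (\<exists>j. sat M (case_nat j (case_nat i e)) E (Exs k (Alls b (Exs c \<delta>))))"
  shows "\<exists>v. \<forall>i. lt M i u \<longrightarrow> (\<exists>j. lt M j v \<and> sat M (case_nat j (case_nat i e)) E (Exs k (Alls b (Exs c \<delta>))))"
proof -
  obtain X where X: "X \<in> sets M" "\<And>w. w \<in> X \<longleftrightarrow> graph_code u w"
    using delta0_comprehension[OF graph_code_definable set_env] by blast
  have "\<exists>m. inf_many M (\<lambda>z. val_lt M X i z m)" if iu: "lt M i u" for i
  proof -
    obtain J where "witness_below i J"
      using total iu witness_below_of_sat by blast
    then show ?thesis
      using inf_many_val_lt_of_jumps[OF X(2) iu] witness_below_iff_witnessed witnessed_iff_unbounded_jumps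
      by blast
  qed
  then obtain m where m: "\<And>i. lt M i u \<Longrightarrow> inf_many M (\<lambda>z. val_lt M X i z m)"
    using principle X(1) is_fun2_graph[OF X(2)] unfolding bounded_inf_principle_def by blast
  have "\<exists>j. lt M j m \<and> sat M (case_nat j (case_nat i e)) E (Exs k (Alls b (Exs c \<delta>)))" if iu: "lt M i u" for i
  proof -
    obtain J where "lt M J m" "\<forall>K. \<exists>s. lt M K s \<and> jump i J s"
      using jumps_of_inf_many_val_lt[OF X(2) iu m[OF iu]] by blast
    then show ?thesis
      using sat_of_witness_below witness_below_iff_witnessed witnessed_iff_unbounded_jumps lt_trans by metis
  qed
  then show ?thesis
    by blast
qed

end

lemma (in rca0_bsigma2) bsigma3_of_bounded_inf_principle:
  assumes "bounded_inf_principle M"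
  shows "BSigma 3 M"
  unfolding BSigma_def
proof (intro allI impI)
  fix p e E u
  assume "sigma_fm 3 p \<and> set_env M E"
    and total: "\<forall>i. lt M i u \<longrightarrow> (\<exists>j. sat M (case_nat j (case_nat i e)) E p)"
  then obtain k b c \<delta> where "delta0 \<delta>" "p = Exs k (Alls b (Exs c \<delta>))" "set_env M E"
    using sigma3_normal_form by blast
  then interpret sigma3_formula M E e \<delta> k b c
    by unfold_locales
  show "\<exists>v. \<forall>i. lt M i u \<longrightarrow> (\<exists>j. lt M j v \<and> sat M (case_nat j (case_nat i e)) E p)"
    using bounding_of_bounded_inf_principle[OF assms] total \<open>p = _\<close> by blast
qed

theorem mainTheorem7:
  fixes M :: "'a l2model"
  assumes "RCA0 M" and "BSigma 2 M"
  shows "BSigma 3 M \<longleftrightarrow> bounded_inf_principle M"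
proof (cases "sets M = {}")
  case True
  \<comment> \<open>there is no set environment, so both sides hold vacuously\<close>
  then show ?thesis
    unfolding BSigma_def bounded_inf_principle_def set_env_def by auto
next
  case False
  then interpret rca0_bsigma2 M
    using assms by unfold_locales
  show ?thesis
    using bounded_inf_principle_of_bsigma3 bsigma3_of_bounded_inf_principle by blast
qed

end
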